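(* Let $G\subset GL(V)$ be a reflection group and fix $g\in G$. If $\ell(a)=\operatorname{codim}(a)$ for every codimension atom $a$ with $a\le_\perp g$, then $\ell(g)=\operatorname{codim}(g)$.
   Context: $V$ is a finite-dimensional vector space of dimension $n$ over $\mathbb{R}$ or $\mathbb{C}$. A reflection is an element of $GL(V)$ of finite order fixing a hyperplane pointwise; a reflection group is a finite subgroup of $GL(V)$ generated by reflections. $\ell(g)$ is the minimal number of reflections of $G$ whose product is $g$ ($\ell(1)=0$). $\operatorname{codim}(g)=n-\dim\{v\in V:gv=v\}$. The codimension order is the partial order on $G$ given by $a\le_\perp c$ iff $\operatorname{codim}(a)+\operatorname{codim}(a^{-1}c)=\operatorname{codim}(c)$. A codimension atom is an element covering the identity in this poset, i.e. $a\ne 1$ such that there is no $x$ with $1<_\perp x<_\perp a$. *)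

theory Defs
  imports "HOL-Analysis.Analysis"
begin

text \<open>V = complex^'n (dimension n = CARD('n)); elements of GL(V) are invertible
 n x n complex matrices acting by (*v). A real reflection group is the special case
 of a group of real matrices.\<close>

type_synonym 'n cmat = "complex ^'n ^'n"

definition fixed_space :: "'n::finite cmat \<Rightarrow> (complex ^'n) set" where
  "fixed_space g = {v. g *v v = v}"

definition codim :: "'n::finite cmat \<Rightarrow> nat" where
  "codim g = CARD('n) - vec.dim (fixed_space g)"

definition has_finite_order :: "'n::finite cmat \<Rightarrow> bool" where
  "has_finite_order g \<longleftrightarrow> (\<exists>k>0. ((\<lambda>x. g ** x) ^^ k) (mat 1) = mat 1)"

definition is_reflection :: "'n::finite cmat \<Rightarrow> bool" where
  "is_reflection g \<longleftrightarrow> invertible g \<and> has_finite_order g \<and> g \<noteq> mat 1 \<and>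
     (\<exists>H. vec.subspace H \<and> vec.dim H + 1 = CARD('n) \<and> (\<forall>v\<in>H. g *v v = v))"

inductive_set gen_group :: "'n::finite cmat set \<Rightarrow> 'n cmat set" for S where
  gen_one: "mat 1 \<in> gen_group S"
| gen_base: "s \<in> S \<Longrightarrow> s \<in> gen_group S"
| gen_mult: "a \<in> gen_group S \<Longrightarrow> b \<in> gen_group S \<Longrightarrow> a ** b \<in> gen_group S"
| gen_inv: "a \<in> gen_group S \<Longrightarrow> matrix_inv a \<in> gen_group S"

definition reflections_of :: "'n::finite cmat set \<Rightarrow> 'n cmat set" where
  "reflections_of G = {r \<in> G. is_reflection r}"

definition reflection_group :: "'n::finite cmat set \<Rightarrow> bool" where
  "reflection_group G \<longleftrightarrow> finite G \<and> (\<forall>g\<in>G. invertible g) \<and>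
     G = gen_group (reflections_of G)"

definition prod_list_mat :: "'n::finite cmat list \<Rightarrow> 'n cmat" where
  "prod_list_mat rs = foldr (\<lambda>a b. a ** b) rs (mat 1)"

definition refl_length :: "'n::finite cmat set \<Rightarrow> 'n cmat \<Rightarrow> nat" where
  "refl_length G g = (LEAST k. \<exists>rs. length rs = k \<and> set rs \<subseteq> reflections_of G \<and> prod_list_mat rs = g)"

definition codim_le :: "'n::finite cmat \<Rightarrow> 'n cmat \<Rightarrow> bool" where
  "codim_le a c \<longleftrightarrow> codim a + codim (matrix_inv a ** c) = codim c"

definition codim_less :: "'n::finite cmat \<Rightarrow> 'n cmat \<Rightarrow> bool" where
  "codim_less a c \<longleftrightarrow> codim_le a c \<and> a \<noteq> c"

definition codim_atom :: "'n::finite cmat set \<Rightarrow> 'n cmat \<Rightarrow> bool" where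
  "codim_atom G a \<longleftrightarrow> a \<in> G \<and> codim_less (mat 1) a \<and>
     \<not> (\<exists>x\<in>G. codim_less (mat 1) x \<and> codim_less x a)"

end

theory Submission
  imports Defs
begin

text \<open>Reflections have codimension at most one and codimension is subadditive, so
  \<open>codim g \<le> \<ell>(g)\<close> always holds. For the converse, induct on \<open>codim g\<close>: if \<open>g \<noteq> 1\<close>, an element
  \<open>a \<noteq> 1\<close> of minimal codimension below \<open>g\<close> is an atom, and \<open>c = a\<^sup>-\<^sup>1 g\<close> satisfies
  \<open>codim c = codim g - codim a\<close> and \<open>c \<le>\<^sub>\<perp> g\<close>, because \<open>c\<^sup>-\<^sup>1 g = g\<^sup>-\<^sup>1 a g\<close> is conjugate to \<open>a\<close>.
  The atoms below \<open>c\<close> lie below \<open>g\<close>, so by induction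
  \<open>\<ell>(g) \<le> \<ell>(a) + \<ell>(c) \<le> codim a + codim c = codim g\<close>.\<close>

lemma matrix_inv_inverse:
  fixes A :: "'a::field^'n^'n"
  assumes "invertible A"
  shows matrix_inv_right: "A ** matrix_inv A = mat 1"
    and matrix_inv_left: "matrix_inv A ** A = mat 1"
proof -
  have "A ** matrix_inv A = mat 1 \<and> matrix_inv A ** A = mat 1"
    using assms unfolding invertible_def matrix_inv_def by (rule someI_ex)
  then show "A ** matrix_inv A = mat 1" "matrix_inv A ** A = mat 1" by auto
qed

lemma matrix_inv_unique:
  fixes A B :: "'a::field^'n^'n"
  assumes "A ** B = mat 1"
  shows "matrix_inv A = B"
proof -
  have "invertible A"
    using assms invertible_right_inverse by blast
  have "matrix_inv A = matrix_inv A ** (A ** B)"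
    using assms by simp
  also have "\<dots> = B"
    using \<open>invertible A\<close> by (simp add: matrix_mul_assoc matrix_inv_left)
  finally show ?thesis .
qed

lemma matrix_inv_cancel_left:
  fixes A B :: "'a::field^'n^'n"
  assumes "invertible A"
  shows "A ** (matrix_inv A ** B) = B"
  using assms by (simp add: matrix_mul_assoc matrix_inv_right)

lemma prod_list_mat_Nil [simp]: "prod_list_mat [] = mat 1"
  by (simp add: prod_list_mat_def)

lemma prod_list_mat_Cons [simp]: "prod_list_mat (x # xs) = x ** prod_list_mat xs"
  by (simp add: prod_list_mat_def)

lemma prod_list_mat_append: "prod_list_mat (xs @ ys) = prod_list_mat xs ** prod_list_mat ys"
  by (induction xs) (auto simp: matrix_mul_assoc)

lemma prod_list_mat_concat_replicate:
  "prod_list_mat (concat (replicate k xs)) = prod_list_mat (replicate k (prod_list_mat xs))"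
  by (induction k) (auto simp: prod_list_mat_append)

lemma subspace_fixed_space: "vec.subspace (fixed_space g)"
  unfolding vec.subspace_def fixed_space_def
  by (auto simp: matrix_vector_right_distrib vec.scale)

lemma dim_fixed_space_le: "vec.dim (fixed_space (g::'n::finite cmat)) \<le> CARD('n)"
  by (rule dim_subset_UNIV_cart_gen)

lemma codim_mult_le: "codim ((x::'n::finite cmat) ** y) \<le> codim x + codim y"
proof -
  let ?S = "fixed_space x" and ?T = "fixed_space y"
  have "?S \<inter> ?T \<subseteq> fixed_space (x ** y)"
    by (auto simp: fixed_space_def simp flip: matrix_vector_mul_assoc)
  then have "vec.dim (?S \<inter> ?T) \<le> vec.dim (fixed_space (x ** y))"
    by (rule vec.dim_subset)
  moreover have "vec.dim {a + b |a b. a \<in> ?S \<and> b \<in> ?T} + vec.dim (?S \<inter> ?T) = vec.dim ?S + vec.dim ?T"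
    using vec.dim_sums_Int subspace_fixed_space by blast
  moreover have "vec.dim {a + b |a b. a \<in> ?S \<and> b \<in> ?T} \<le> CARD('n)"
    by (rule dim_subset_UNIV_cart_gen)
  ultimately show ?thesis
    unfolding codim_def using dim_fixed_space_le[of x] dim_fixed_space_le[of y] by linarith
qed

lemma codim_eq_0_iff: "codim (g::'n::finite cmat) = 0 \<longleftrightarrow> g = mat 1"
proof
  assume "codim g = 0"
  then have "vec.dim (fixed_space g) = vec.dim (UNIV :: (complex^'n) set)"
    using dim_fixed_space_le[of g] vec_dim_card[where 'a=complex and 'n='n]
    unfolding codim_def by (simp del: vec.dim_UNIV)
  then have "vec.span (fixed_space g) = UNIV"
    using vec.dim_eq_full vec_dim_card[where 'a=complex and 'n='n] vec.dimension_def vec.dim_UNIV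
    by metis
  then have "fixed_space g = UNIV"
    using subspace_fixed_space vec.span_eq_iff by metis
  then show "g = mat 1"
    by (auto simp: fixed_space_def matrix_eq)
next
  assume "g = mat 1"
  then have "fixed_space g = UNIV"
    by (simp add: fixed_space_def)
  then show "codim g = 0"
    using vec_dim_card[where 'a=complex and 'n='n] by (simp add: codim_def del: vec.dim_UNIV)
qed

lemma matrix_inv_vector_cancel:
  fixes A :: "'a::field^'n^'n"
  assumes "invertible A"
  shows "A *v (matrix_inv A *v v) = v" "matrix_inv A *v (A *v v) = v"
  using assms by (simp_all add: matrix_vector_mul_assoc matrix_inv_inverse)

lemma fixed_space_conjugate:
  fixes p a :: "'n::finite cmat"
  assumes "invertible p"
  shows "fixed_space (matrix_inv p ** a ** p) = (\<lambda>v. matrix_inv p *v v) ` fixed_space a"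
proof -
  note cancel = matrix_inv_vector_cancel[OF assms]
  have "matrix_inv p *v x = v \<longleftrightarrow> x = p *v v" for x v
    using cancel by metis
  then have mem: "v \<in> fixed_space (matrix_inv p ** a ** p) \<longleftrightarrow> p *v v \<in> fixed_space a" for v
    by (simp add: fixed_space_def flip: matrix_vector_mul_assoc)
  show ?thesis
  proof (intro set_eqI iffI)
    fix v
    assume "v \<in> fixed_space (matrix_inv p ** a ** p)"
    then show "v \<in> (\<lambda>v. matrix_inv p *v v) ` fixed_space a"
      using mem cancel by (intro image_eqI[where x = "p *v v"]) auto
  qed (use mem cancel in auto)
qed

lemma codim_conjugate:
  fixes p a :: "'n::finite cmat"
  assumes "invertible p"
  shows "codim (matrix_inv p ** a ** p) = codim a"
proof -
  have "inj ((*v) (matrix_inv p))"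
    using assms by (intro inj_matrix_vector_mult) (metis invertible_def matrix_inv_inverse)
  then have "vec.dim ((\<lambda>v. matrix_inv p *v v) ` fixed_space a) = vec.dim (fixed_space a)"
    by (metis vec.dim_image_eq[OF matrix_vector_mul_linear_gen] inj_on_subset subset_UNIV)
  then show ?thesis
    using assms by (simp add: codim_def fixed_space_conjugate)
qed

lemma codim_reflection_le_1:
  fixes r :: "'n::finite cmat"
  assumes "is_reflection r"
  shows "codim r \<le> 1"
proof -
  obtain H where H: "vec.dim H + 1 = CARD('n)" "\<forall>v\<in>H. r *v v = v"
    using assms unfolding is_reflection_def by blast
  then have "vec.dim H \<le> vec.dim (fixed_space r)"
    by (intro vec.dim_subset) (auto simp: fixed_space_def)
  then show ?thesis
    using H unfolding codim_def by linarith
qed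

lemma codim_prod_list_mat_le:
  "\<forall>r\<in>set rs. is_reflection r \<Longrightarrow> codim (prod_list_mat rs) \<le> length rs"
proof (induction rs)
  case Nil
  then show ?case by (simp add: codim_eq_0_iff)
next
  case (Cons r rs)
  then show ?case
    using codim_reflection_le_1[of r] codim_mult_le[of r "prod_list_mat rs"] by simp
qed

lemma codim_less_mat_1_iff: "codim_less (mat 1) x \<longleftrightarrow> x \<noteq> mat 1"
  by (auto simp: codim_less_def codim_le_def codim_eq_0_iff matrix_inv_unique)

lemma codim_le_trans:
  fixes x y g :: "'n::finite cmat"
  assumes "invertible x" "invertible y" "codim_le y x" "codim_le x g"
  shows "codim_le y g"
proof -
  have "matrix_inv y ** g = (matrix_inv y ** x) ** (matrix_inv x ** g)"
    using assms(1) by (simp add: matrix_inv_cancel_left flip: matrix_mul_assoc)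
  then have "codim (matrix_inv y ** g) \<le> codim (matrix_inv y ** x) + codim (matrix_inv x ** g)"
    using codim_mult_le[of "matrix_inv y ** x" "matrix_inv x ** g"] by simp
  moreover have "codim g \<le> codim y + codim (matrix_inv y ** g)"
    using codim_mult_le[of y "matrix_inv y ** g"] assms(2) by (simp add: matrix_inv_cancel_left)
  ultimately show ?thesis
    using assms(3,4) unfolding codim_le_def by linarith
qed

lemma codim_le_complement:
  fixes a g :: "'n::finite cmat"
  assumes "invertible a" "invertible g" "codim_le a g"
  shows "codim_le (matrix_inv a ** g) g"
proof -
  have "(matrix_inv a ** g) ** (matrix_inv g ** a) = mat 1"
    using assms(1,2) by (simp add: matrix_inv_cancel_left matrix_inv_left flip: matrix_mul_assoc)
  then have "matrix_inv (matrix_inv a ** g) ** g = matrix_inv g ** a ** g"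
    by (simp add: matrix_inv_unique)
  then have "codim (matrix_inv (matrix_inv a ** g) ** g) = codim a"
    using codim_conjugate[OF assms(2)] by simp
  then show ?thesis
    using assms(3) unfolding codim_le_def by simp
qed

lemma refl_length_le:
  "set rs \<subseteq> reflections_of G \<Longrightarrow> prod_list_mat rs = g \<Longrightarrow> refl_length G g \<le> length rs"
  unfolding refl_length_def by (blast intro: Least_le)

context
  fixes G :: "'n::finite cmat set"
  assumes G: "reflection_group G"
begin

lemma reflection_group_closed:
  shows reflection_group_mat_1: "mat 1 \<in> G"
    and reflection_group_mult: "a \<in> G \<Longrightarrow> b \<in> G \<Longrightarrow> a ** b \<in> G"
    and reflection_group_matrix_inv: "a \<in> G \<Longrightarrow> matrix_inv a \<in> G"
    and reflection_group_invertible: "a \<in> G \<Longrightarrow> invertible a"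
  using G unfolding reflection_group_def by (metis gen_group.intros)+

lemma reflection_group_power: "a \<in> G \<Longrightarrow> prod_list_mat (replicate k a) \<in> G"
  by (induction k) (auto simp: reflection_group_closed)

text \<open>The generating set of \<open>gen_group\<close> need not be closed under inversion; finiteness of \<open>G\<close>
  makes inverses powers, so products of reflections suffice.\<close>

lemma matrix_inv_eq_power:
  assumes "a \<in> G"
  obtains m where "matrix_inv a = prod_list_mat (replicate m a)"
proof -
  let ?pow = "\<lambda>k. prod_list_mat (replicate k a)"
  have "range ?pow \<subseteq> G" "finite G"
    using G assms reflection_group_power by (auto simp: reflection_group_def)
  then have "\<not> inj ?pow"
    using finite_imageD finite_subset infinite_UNIV_nat by blast
  then obtain i j where "i < j" and pow_ij: "?pow i = ?pow j"
    unfolding inj_def by (metis linorder_neq_iff)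
  then obtain k where "j = i + Suc k"
    by (metis add_Suc_right less_imp_Suc_add)
  then have "?pow i ** (a ** ?pow k) = ?pow j"
    by (simp only: replicate_add replicate_Suc prod_list_mat_append prod_list_mat_Cons)
  also have "\<dots> = ?pow i"
    using pow_ij by simp
  finally have eq: "?pow i ** (a ** ?pow k) = ?pow i" .
  have inv: "invertible (?pow i)"
    using assms reflection_group_invertible reflection_group_power by blast
  have "a ** ?pow k = matrix_inv (?pow i) ** (?pow i ** (a ** ?pow k))"
    using inv by (simp add: matrix_mul_assoc matrix_inv_left)
  also have "\<dots> = mat 1"
    using inv by (simp only: eq) (simp add: matrix_inv_left)
  finally show ?thesis
    using that matrix_inv_unique by blast
qed

lemma reflection_group_prod_reflections:
  assumes "g \<in> G"
  obtains rs where "set rs \<subseteq> reflections_of G" "prod_list_mat rs = g"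
proof -
  have "g \<in> gen_group (reflections_of G)"
    using G assms by (simp add: reflection_group_def)
  then have "\<exists>rs. set rs \<subseteq> reflections_of G \<and> prod_list_mat rs = g"
  proof (induction rule: gen_group.induct)
    case gen_one
    show ?case by (intro exI[of _ "[]"]) simp
  next
    case (gen_base s)
    then show ?case by (intro exI[of _ "[s]"]) simp
  next
    case (gen_mult a b)
    then obtain ra rb where "set ra \<subseteq> reflections_of G" "prod_list_mat ra = a"
      "set rb \<subseteq> reflections_of G" "prod_list_mat rb = b"
      by blast
    then show ?case
      by (intro exI[of _ "ra @ rb"]) (simp add: prod_list_mat_append)
  next
    case (gen_inv a)
    then obtain ra where ra: "set ra \<subseteq> reflections_of G" "prod_list_mat ra = a"
      by blast
    have "a \<in> G"
      using gen_inv(1) G by (simp add: reflection_group_def)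
    then obtain m where "matrix_inv a = prod_list_mat (replicate m a)"
      by (rule matrix_inv_eq_power)
    then show ?case
      using ra by (intro exI[of _ "concat (replicate m ra)"]) (auto simp: prod_list_mat_concat_replicate)
  qed
  then show ?thesis
    using that by blast
qed

lemma refl_length_attained:
  assumes "g \<in> G"
  obtains rs where "length rs = refl_length G g" "set rs \<subseteq> reflections_of G" "prod_list_mat rs = g"
proof -
  obtain rs where "set rs \<subseteq> reflections_of G" "prod_list_mat rs = g"
    using assms by (rule reflection_group_prod_reflections)
  then have "\<exists>rs'. length rs' = length rs \<and> set rs' \<subseteq> reflections_of G \<and> prod_list_mat rs' = g"
    by blast
  then have "\<exists>rs'. length rs' = refl_length G g \<and> set rs' \<subseteq> reflections_of G \<and> prod_list_mat rs' = g"
    unfolding refl_length_def by (rule LeastI)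
  then show ?thesis
    using that by blast
qed

lemma refl_length_mult_le:
  assumes "a \<in> G" "b \<in> G"
  shows "refl_length G (a ** b) \<le> refl_length G a + refl_length G b"
proof -
  obtain ra where ra: "length ra = refl_length G a" "set ra \<subseteq> reflections_of G" "prod_list_mat ra = a"
    using assms(1) by (rule refl_length_attained)
  obtain rb where rb: "length rb = refl_length G b" "set rb \<subseteq> reflections_of G" "prod_list_mat rb = b"
    using assms(2) by (rule refl_length_attained)
  have "refl_length G (a ** b) \<le> length (ra @ rb)"
    by (rule refl_length_le) (use ra rb in \<open>auto simp: prod_list_mat_append\<close>)
  then show ?thesis
    using ra(1) rb(1) by simp
qed

lemma codim_le_refl_length:
  assumes "g \<in> G"
  shows "codim g \<le> refl_length G g"
proof -
  obtain rs where "length rs = refl_length G g" "set rs \<subseteq> reflections_of G" "prod_list_mat rs = g"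
    using assms by (rule refl_length_attained)
  then show ?thesis
    using codim_prod_list_mat_le[of rs] by (auto simp: reflections_of_def)
qed

lemma exists_codim_atom_below:
  assumes "g \<in> G" "g \<noteq> mat 1"
  obtains a where "codim_atom G a" "codim_le a g"
proof -
  let ?P = "\<lambda>x. x \<in> G \<and> x \<noteq> mat 1 \<and> codim_le x g"
  have "?P g"
    using assms by (simp add: codim_le_def matrix_inv_left reflection_group_invertible codim_eq_0_iff)
  then obtain x where x: "?P x" and x_min: "\<And>y. ?P y \<Longrightarrow> codim x \<le> codim y"
    using ex_has_least_nat[of ?P g codim] by blast
  have "\<not> codim_less y x" if "y \<in> G" "y \<noteq> mat 1" for y
  proof
    assume "codim_less y x"
    then have yx: "codim_le y x" "y \<noteq> x"
      by (auto simp: codim_less_def)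
    have "x = y ** (matrix_inv y ** x)"
      using that(1) by (simp add: reflection_group_invertible matrix_inv_cancel_left)
    then have "codim (matrix_inv y ** x) \<noteq> 0"
      using yx(2) by (auto simp: codim_eq_0_iff)
    then have "codim y < codim x"
      using yx(1) unfolding codim_le_def by linarith
    moreover have "codim_le y g"
      using codim_le_trans x yx(1) that(1) reflection_group_invertible by blast
    ultimately show False
      using x_min that by fastforce
  qed
  then have "codim_atom G x"
    using x by (auto simp: codim_atom_def codim_less_mat_1_iff)
  then show ?thesis
    using that x by blast
qed

lemma refl_length_le_codim:
  "g \<in> G \<Longrightarrow> \<forall>a. codim_atom G a \<and> codim_le a g \<longrightarrow> refl_length G a = codim a
    \<Longrightarrow> refl_length G g \<le> codim g"
proof (induction "codim g" arbitrary: g rule: less_induct)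
  case less
  show ?case
  proof (cases "g = mat 1")
    case True
    then show ?thesis
      using refl_length_le[of "[]" G g] by simp
  next
    case False
    obtain a where a: "codim_atom G a" "codim_le a g"
      using exists_codim_atom_below less.prems(1) False by blast
    have aG: "a \<in> G" and "a \<noteq> mat 1"
      using a(1) by (auto simp: codim_atom_def codim_less_mat_1_iff)
    define c where "c = matrix_inv a ** g"
    have cG: "c \<in> G"
      unfolding c_def using aG less.prems(1) reflection_group_closed by blast
    have invertible: "invertible a" "invertible g"
      using aG less.prems(1) reflection_group_invertible by blast+
    have codim_c: "codim c = codim g - codim a" and "codim a > 0"
      using a(2) \<open>a \<noteq> mat 1\<close> codim_eq_0_iff unfolding codim_le_def c_def by auto
    have "codim_le c g"
      unfolding c_def using invertible a(2) by (rule codim_le_complement)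
    then have "codim_le b g" if "codim_atom G b" "codim_le b c" for b
      using that cG codim_le_trans reflection_group_invertible by (auto simp: codim_atom_def)
    then have "\<forall>b. codim_atom G b \<and> codim_le b c \<longrightarrow> refl_length G b = codim b"
      using less.prems(2) by blast
    moreover have "codim c < codim g"
      using codim_c \<open>codim a > 0\<close> False codim_eq_0_iff[of g] by simp
    ultimately have "refl_length G c \<le> codim c"
      using less.hyps cG by blast
    moreover have "g = a ** c" "refl_length G a = codim a"
      using invertible less.prems(2) a by (auto simp: c_def matrix_inv_cancel_left)
    ultimately show ?thesis
      using refl_length_mult_le[OF aG cG] codim_c a(2) unfolding codim_le_def by simp
  qed
qed

end

theorem mainTheorem2:
  fixes G :: "('n::finite) cmat set" and g :: "'n cmat"
  assumes "reflection_group G"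
    and "g \<in> G"
    and "\<forall>a. codim_atom G a \<and> codim_le a g \<longrightarrow> refl_length G a = codim a"
  shows "refl_length G g = codim g"
  using refl_length_le_codim[OF assms] codim_le_refl_length[OF assms(1,2)] by simp

end
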